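(* Let $A$ and $B$ be finite groups. Then the direct product $A \times B$ is weakly-top if and only if both $A$ and $B$ are weakly-top. Likewise, $A \times B$ is top if and only if both $A$ and $B$ are top.
   Context: For a group $H$, $H'$ denotes its commutator subgroup. A finite group $G$ is weakly-top if $|H/H'| \leq |G/G'|$ for every proper subgroup $H<G$, and top if $|H/H'| < |G/G'|$ for every proper subgroup $H<G$. *)

theory Defs
  imports "HOL-Algebra.Algebra"
begin

definition abelianization_order :: "('a, 'b) monoid_scheme \<Rightarrow> 'a set \<Rightarrow> nat" where
  "abelianization_order G H = card (carrier ((G\<lparr>carrier := H\<rparr>) Mod (derived G H)))"

definition weakly_top :: "('a, 'b) monoid_scheme \<Rightarrow> bool" where
  "weakly_top G \<longleftrightarrow> (\<forall>H. subgroup H G \<and> H \<subset> carrier G \<longrightarrow>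
      abelianization_order G H \<le> abelianization_order G (carrier G))"

definition top_group :: "('a, 'b) monoid_scheme \<Rightarrow> bool" where
  "top_group G \<longleftrightarrow> (\<forall>H. subgroup H G \<and> H \<subset> carrier G \<longrightarrow>
      abelianization_order G H < abelianization_order G (carrier G))"

end

theory Submission
  imports Defs
begin

(* Write a(H) = |H/H'| = |H| / |H'|. Since (H1 x H2)' = H1' x H2', a(H1 x H2) = a(H1) a(H2);
   applied to H x B and A x H this passes weak topness and topness from A x B down to A and B,
   after cancelling the positive factor a(B) or a(A).
   Conversely, a subgroup S of A x B is an extension of N x 1 = S \<inter> (A x 1) by its projection
   snd S to B. The projection maps S' onto (snd S)', and S' \<inter> (A x 1) contains (N x 1)', so
   |S'| \<ge> |(snd S)'| |N'| while |S| = |snd S| |N|. Hence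
   a(S) \<le> a(N) a(snd S) \<le> a(A) a(B) = a(A x B), and if S is proper then N or snd S is proper,
   which makes the last inequality strict when A and B are top. *)

lemma (in group) abelianization_order_mult_card_derived:
  assumes "subgroup H G"
  shows "abelianization_order G H * card (derived G H) = card H"
proof -
  have "subgroup (derived G H) (G\<lparr>carrier := H\<rparr>)"
    using assms by (intro subgroup_incl derived_is_subgroup derived_incl subgroup.subset) auto
  then show ?thesis
    using group.lagrange[OF subgroup_imp_group[OF assms]]
    unfolding abelianization_order_def FactGroup_def order_def by simp
qed

lemma (in group) card_derived_pos:
  assumes "subgroup H G" "finite H"
  shows "0 < card (derived G H)"
proof -
  have "finite (derived G H)"
    using derived_incl[OF subset_refl assms(1)] assms(2) finite_subset by blast
  moreover have "\<one> \<in> derived G H"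
    unfolding derived_def by (rule generate.one)
  ultimately show ?thesis
    by (auto simp: card_gt_0_iff)
qed

lemma (in group) abelianization_order_pos:
  assumes "subgroup H G" "finite H"
  shows "0 < abelianization_order G H"
  using abelianization_order_mult_card_derived[OF assms(1)] assms subgroup.one_closed
  by (metis card_gt_0_iff empty_iff mult_is_0 neq0_conv)

lemma (in group) abelianization_order_trivial: "abelianization_order G {\<one>} = 1"
  using abelianization_order_mult_card_derived[OF triv_subgroup]
  by simp

lemma (in group_hom) card_image_mult_card_kernel:
  "card (h ` carrier G) * card (kernel G H h) = card (carrier G)"
proof -
  let ?I = "H\<lparr>carrier := h ` carrier G\<rparr>"
  have "group_hom G ?I h"
    using H.subgroup_imp_group[OF img_is_subgroup] hom_mult
    by (auto intro!: group_hom.intro group_hom_axioms.intro homI)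
  then have "G Mod kernel G ?I h \<cong> ?I"
    by (simp add: group_hom.FactGroup_iso)
  moreover have "kernel G ?I h = kernel G H h"
    by (simp add: kernel_def)
  ultimately have "card (rcosets (kernel G H h)) = card (h ` carrier G)"
    using iso_same_card[of "G Mod kernel G H h" ?I] unfolding FactGroup_def by simp
  then show ?thesis
    using G.lagrange[OF subgroup_kernel] unfolding order_def by simp
qed

lemma (in group_hom) card_subgroup_image_mult_kernel:
  assumes "subgroup S G"
  shows "card (h ` S) * card (S \<inter> kernel G H h) = card S"
proof -
  have "group_hom (G\<lparr>carrier := S\<rparr>) H h"
    using G.subgroup_imp_group[OF assms(1)] subgroup.subset[OF assms(1)]
    by (auto intro!: group_hom.intro group_hom_axioms.intro homI simp: subset_iff)
  moreover have "kernel (G\<lparr>carrier := S\<rparr>) H h = S \<inter> kernel G H h"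
    using subgroup.subset[OF assms(1)] by (auto simp: kernel_def)
  ultimately show ?thesis
    using group_hom.card_image_mult_card_kernel[of "G\<lparr>carrier := S\<rparr>" H h] by simp
qed

lemma (in group_hom) subgroup_eq_carrier_if_kernel_subset:
  assumes S: "subgroup S G" and ker: "kernel G H h \<subseteq> S" and img: "h ` S = h ` carrier G"
  shows "S = carrier G"
proof
  show "S \<subseteq> carrier G"
    using subgroup.subset[OF S] .
  show "carrier G \<subseteq> S"
  proof
    fix x assume x: "x \<in> carrier G"
    then obtain s where s: "s \<in> S" "h s = h x"
      using img by (metis imageE imageI)
    have s_G: "s \<in> carrier G"
      using s(1) subgroup.subset[OF S] by blast
    have "x \<otimes> inv s \<in> kernel G H h"
      using x s_G s(2) by (simp add: kernel_def)
    then have "x \<otimes> inv s \<otimes> s \<in> S"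
      using ker s(1) subgroup.m_closed[OF S] by blast
    then show "x \<in> S"
      using x s_G by (simp add: G.m_assoc)
  qed
qed

lemma (in group_hom) abelianization_order_le_image_mult_kernel:
  assumes S: "subgroup S G" and fin: "finite S"
  shows "abelianization_order G S
    \<le> abelianization_order H (h ` S) * abelianization_order G (S \<inter> kernel G H h)"
proof -
  define K where "K = S \<inter> kernel G H h"
  define D where "D = derived G S"
  have K: "subgroup K G" and "K \<subseteq> S"
    unfolding K_def using G.subgroups_Inter_pair[OF S subgroup_kernel] by auto
  have D: "subgroup D G" and "D \<subseteq> S"
    unfolding D_def
    using G.derived_is_subgroup[OF subgroup.subset[OF S]] G.derived_incl[OF subset_refl S] by auto
  have fin_D: "finite D"
    using \<open>D \<subseteq> S\<close> fin finite_subset by auto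
  have hS: "subgroup (h ` S) H"
    using subgroup_img_is_subgroup[OF S] .
  have "derived G K \<subseteq> D \<inter> kernel G H h"
    using G.mono_derived[OF \<open>K \<subseteq> S\<close>] G.derived_incl[OF subset_refl K]
    unfolding D_def K_def by blast
  then have "card (derived H (h ` S)) * card (derived G K)
      \<le> card (h ` D) * card (D \<inter> kernel G H h)"
    using derived_img[OF subgroup.subset[OF S]] fin_D by (simp add: D_def card_mono)
  also have "\<dots> = card D"
    using card_subgroup_image_mult_kernel[OF D] .
  finally have card_D: "card (derived H (h ` S)) * card (derived G K) \<le> card D" .
  have "abelianization_order G S * card D = card (h ` S) * card K"
    using G.abelianization_order_mult_card_derived[OF S] card_subgroup_image_mult_kernel[OF S]
    unfolding D_def K_def by simp
  also have "\<dots> = abelianization_order H (h ` S) * abelianization_order G K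
      * (card (derived H (h ` S)) * card (derived G K))"
    using H.abelianization_order_mult_card_derived[OF hS]
      G.abelianization_order_mult_card_derived[OF K]
    by (metis mult.assoc mult.left_commute)
  also have "\<dots> \<le> abelianization_order H (h ` S) * abelianization_order G K * card D"
    using card_D by simp
  finally show ?thesis
    using G.card_derived_pos[OF S fin] unfolding D_def K_def by simp
qed

lemma group_hom_DirProd_fst:
  assumes "group A" "group B"
  shows "group_hom (A \<times>\<times> B) A fst"
  by (intro group_hom.intro DirProd_group assms group_hom_axioms.intro homI)
     (auto simp: mult_DirProd')

lemma group_hom_DirProd_snd:
  assumes "group A" "group B"
  shows "group_hom (A \<times>\<times> B) B snd"
  by (intro group_hom.intro DirProd_group assms group_hom_axioms.intro homI)
     (auto simp: mult_DirProd')

lemma group_hom_DirProd_inl: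
  assumes "group A" "group B"
  shows "group_hom A (A \<times>\<times> B) (\<lambda>a. (a, \<one>\<^bsub>B\<^esub>))"
  by (intro group_hom.intro DirProd_group assms group_hom_axioms.intro homI)
     (auto simp: group.is_monoid assms)

lemma group_hom_DirProd_inr:
  assumes "group A" "group B"
  shows "group_hom B (A \<times>\<times> B) (\<lambda>b. (\<one>\<^bsub>A\<^esub>, b))"
  by (intro group_hom.intro DirProd_group assms group_hom_axioms.intro homI)
     (auto simp: group.is_monoid assms)

lemma derived_DirProd:
  assumes "group A" "group B" "subgroup H1 A" "subgroup H2 B"
  shows "derived (A \<times>\<times> B) (H1 \<times> H2) = derived A H1 \<times> derived B H2"
proof
  interpret A: group A by fact
  interpret B: group B by fact
  interpret AB: group "A \<times>\<times> B" using DirProd_group[OF assms(1,2)] .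
  have H1: "H1 \<subseteq> carrier A" and H2: "H2 \<subseteq> carrier B"
    using assms(3,4) subgroup.subset by auto
  have "derived_set (A \<times>\<times> B) (H1 \<times> H2) \<subseteq> derived_set A H1 \<times> derived_set B H2"
    using H1 H2 by (fastforce simp: subset_iff)
  also have "\<dots> \<subseteq> derived A H1 \<times> derived B H2"
    unfolding derived_def by (auto intro: generate.incl)
  finally show "derived (A \<times>\<times> B) (H1 \<times> H2) \<subseteq> derived A H1 \<times> derived B H2"
    unfolding derived_def[of "A \<times>\<times> B"]
    using AB.generate_subgroup_incl DirProd_subgroups[OF assms(1) A.derived_is_subgroup[OF H1]
        assms(2) B.derived_is_subgroup[OF H2]] by blast
  have inl: "(\<lambda>a. (a, \<one>\<^bsub>B\<^esub>)) ` derived A H1 \<subseteq> derived (A \<times>\<times> B) (H1 \<times> H2)"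
    using group_hom.derived_img[OF group_hom_DirProd_inl[OF assms(1,2)] H1]
      AB.mono_derived[of "(\<lambda>a. (a, \<one>\<^bsub>B\<^esub>)) ` H1" "H1 \<times> H2"] subgroup.one_closed[OF assms(4)]
    by auto
  have inr: "(\<lambda>b. (\<one>\<^bsub>A\<^esub>, b)) ` derived B H2 \<subseteq> derived (A \<times>\<times> B) (H1 \<times> H2)"
    using group_hom.derived_img[OF group_hom_DirProd_inr[OF assms(1,2)] H2]
      AB.mono_derived[of "(\<lambda>b. (\<one>\<^bsub>A\<^esub>, b)) ` H2" "H1 \<times> H2"] subgroup.one_closed[OF assms(3)]
    by auto
  show "derived A H1 \<times> derived B H2 \<subseteq> derived (A \<times>\<times> B) (H1 \<times> H2)"
  proof safe
    fix x y assume x: "x \<in> derived A H1" and y: "y \<in> derived B H2"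
    have "subgroup (derived (A \<times>\<times> B) (H1 \<times> H2)) (A \<times>\<times> B)"
      using H1 H2 by (intro AB.derived_is_subgroup) auto
    moreover have "(x, \<one>\<^bsub>B\<^esub>) \<in> derived (A \<times>\<times> B) (H1 \<times> H2)"
      and "(\<one>\<^bsub>A\<^esub>, y) \<in> derived (A \<times>\<times> B) (H1 \<times> H2)"
      using inl inr x y by auto
    ultimately have "(x, \<one>\<^bsub>B\<^esub>) \<otimes>\<^bsub>A \<times>\<times> B\<^esub> (\<one>\<^bsub>A\<^esub>, y) \<in> derived (A \<times>\<times> B) (H1 \<times> H2)"
      by (rule subgroup.m_closed)
    moreover have "x \<in> carrier A" "y \<in> carrier B"
      using A.derived_in_carrier[OF H1] B.derived_in_carrier[OF H2] x y by auto
    ultimately show "(x, y) \<in> derived (A \<times>\<times> B) (H1 \<times> H2)"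
      by simp
  qed
qed

lemma abelianization_order_DirProd:
  assumes "group A" "group B" "subgroup H1 A" "subgroup H2 B" "finite H1" "finite H2"
  shows "abelianization_order (A \<times>\<times> B) (H1 \<times> H2)
    = abelianization_order A H1 * abelianization_order B H2"
proof -
  have "abelianization_order (A \<times>\<times> B) (H1 \<times> H2) * (card (derived A H1) * card (derived B H2))
      = card H1 * card H2"
    using group.abelianization_order_mult_card_derived[OF DirProd_group[OF assms(1,2)]
        DirProd_subgroups[OF assms(1,3,2,4)]]
    by (simp add: derived_DirProd[OF assms(1-4)] card_cartesian_product)
  also have "\<dots> = abelianization_order A H1 * abelianization_order B H2
      * (card (derived A H1) * card (derived B H2))"
    using group.abelianization_order_mult_card_derived[OF assms(1,3)]
      group.abelianization_order_mult_card_derived[OF assms(2,4)]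
    by (metis mult.assoc mult.left_commute)
  finally show ?thesis
    using group.card_derived_pos[OF assms(1,3,5)] group.card_derived_pos[OF assms(2,4,6)] by simp
qed

lemma weakly_top_subgroup_le:
  assumes "weakly_top G" "subgroup H G"
  shows "abelianization_order G H \<le> abelianization_order G (carrier G)"
  using assms subgroup.subset unfolding weakly_top_def by fastforce

lemma top_group_subgroup_less:
  assumes "top_group G" "subgroup H G" "H \<noteq> carrier G"
  shows "abelianization_order G H < abelianization_order G (carrier G)"
  using assms subgroup.subset unfolding top_group_def by blast

lemma top_group_imp_weakly_top: "top_group G \<Longrightarrow> weakly_top G"
  unfolding top_group_def weakly_top_def by (simp add: less_imp_le)

locale finite_group_pair = A: group A + B: group B
  for A :: "('a, 'c) monoid_scheme" and B :: "('b, 'd) monoid_scheme" +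
  assumes finite_A: "finite (carrier A)" and finite_B: "finite (carrier B)"
begin

sublocale snd: group_hom "A \<times>\<times> B" B snd
  using group_hom_DirProd_snd[OF A.group_axioms B.group_axioms] .

lemma abelianization_order_prod:
  assumes "subgroup H1 A" "subgroup H2 B"
  shows "abelianization_order (A \<times>\<times> B) (H1 \<times> H2)
    = abelianization_order A H1 * abelianization_order B H2"
  using abelianization_order_DirProd[OF A.group_axioms B.group_axioms assms] assms
    finite_A finite_B subgroup.subset finite_subset by metis

lemma abelianization_order_subgroup_le:
  assumes S: "subgroup S (A \<times>\<times> B)"
  obtains N where "subgroup N A"
    and "abelianization_order (A \<times>\<times> B) S
      \<le> abelianization_order A N * abelianization_order B (snd ` S)"
    and "N = carrier A \<Longrightarrow> snd ` S = carrier B \<Longrightarrow> S = carrier (A \<times>\<times> B)"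
proof
  have ker: "kernel (A \<times>\<times> B) B snd = carrier A \<times> {\<one>\<^bsub>B\<^esub>}"
    by (auto simp: kernel_def)
  define K where "K = S \<inter> kernel (A \<times>\<times> B) B snd"
  have K: "subgroup K (A \<times>\<times> B)"
    unfolding K_def using snd.G.subgroups_Inter_pair[OF S snd.subgroup_kernel] .
  define N where "N = fst ` K"
  show N: "subgroup N A"
    unfolding N_def
    using group_hom.subgroup_img_is_subgroup
        [OF group_hom_DirProd_fst[OF A.group_axioms B.group_axioms] K] .
  have K_eq: "K = N \<times> {\<one>\<^bsub>B\<^esub>}"
    unfolding N_def K_def ker by force
  have fin_S: "finite S" and fin_N: "finite N"
    using subgroup.subset[OF S] subgroup.subset[OF N] finite_A finite_B
    by (simp_all add: finite_subset)
  have "abelianization_order (A \<times>\<times> B) S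
      \<le> abelianization_order B (snd ` S) * abelianization_order (A \<times>\<times> B) K"
    unfolding K_def using snd.abelianization_order_le_image_mult_kernel[OF S fin_S] .
  also have "abelianization_order (A \<times>\<times> B) K = abelianization_order A N"
    unfolding K_eq using abelianization_order_prod[OF N B.triv_subgroup]
    by (simp add: B.abelianization_order_trivial)
  finally show "abelianization_order (A \<times>\<times> B) S
      \<le> abelianization_order A N * abelianization_order B (snd ` S)"
    by (simp add: mult.commute)
  assume "N = carrier A" and "snd ` S = carrier B"
  then have "kernel (A \<times>\<times> B) B snd \<subseteq> S" and "snd ` S = snd ` carrier (A \<times>\<times> B)"
    using K_eq ker unfolding K_def by auto
  then show "S = carrier (A \<times>\<times> B)"
    using snd.subgroup_eq_carrier_if_kernel_subset[OF S] by blast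
qed

lemma weakly_top_prod:
  assumes "weakly_top A" "weakly_top B"
  shows "weakly_top (A \<times>\<times> B)"
  unfolding weakly_top_def
proof (intro allI impI)
  fix S assume "subgroup S (A \<times>\<times> B) \<and> S \<subset> carrier (A \<times>\<times> B)"
  then have S: "subgroup S (A \<times>\<times> B)" ..
  obtain N where N: "subgroup N A"
    and bound: "abelianization_order (A \<times>\<times> B) S
      \<le> abelianization_order A N * abelianization_order B (snd ` S)"
    using abelianization_order_subgroup_le[OF S] by blast
  note bound
  also have "\<dots> \<le> abelianization_order A (carrier A) * abelianization_order B (carrier B)"
    using assms N snd.subgroup_img_is_subgroup[OF S]
    by (intro mult_le_mono weakly_top_subgroup_le)
  finally show "abelianization_order (A \<times>\<times> B) S
      \<le> abelianization_order (A \<times>\<times> B) (carrier (A \<times>\<times> B))"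
    by (simp add: abelianization_order_prod A.subgroup_self B.subgroup_self)
qed

lemma top_group_prod:
  assumes top_A: "top_group A" and top_B: "top_group B"
  shows "top_group (A \<times>\<times> B)"
  unfolding top_group_def
proof (intro allI impI)
  fix S assume S_proper: "subgroup S (A \<times>\<times> B) \<and> S \<subset> carrier (A \<times>\<times> B)"
  then have S: "subgroup S (A \<times>\<times> B)" ..
  have snd_S: "subgroup (snd ` S) B"
    using snd.subgroup_img_is_subgroup[OF S] .
  have "finite (snd ` S)"
    using subgroup.subset[OF snd_S] finite_B by (rule finite_subset)
  obtain N where N: "subgroup N A"
    and bound: "abelianization_order (A \<times>\<times> B) S
      \<le> abelianization_order A N * abelianization_order B (snd ` S)"
    and full: "N = carrier A \<Longrightarrow> snd ` S = carrier B \<Longrightarrow> S = carrier (A \<times>\<times> B)"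
    using abelianization_order_subgroup_le[OF S] by blast
  note bound
  also have "abelianization_order A N * abelianization_order B (snd ` S)
      < abelianization_order A (carrier A) * abelianization_order B (carrier B)"
  proof (cases "N = carrier A")
    case True
    then have "snd ` S \<noteq> carrier B"
      using full S_proper by blast
    then show ?thesis
      using True top_B snd_S A.abelianization_order_pos[OF A.subgroup_self finite_A]
      by (simp add: top_group_subgroup_less)
  next
    case False
    then show ?thesis
      using top_A top_B N snd_S B.abelianization_order_pos[OF snd_S \<open>finite (snd ` S)\<close>]
      by (intro mult_less_le_imp_less top_group_subgroup_less weakly_top_subgroup_le
          top_group_imp_weakly_top) auto
  qed
  finally show "abelianization_order (A \<times>\<times> B) S
      < abelianization_order (A \<times>\<times> B) (carrier (A \<times>\<times> B))"
    by (simp add: abelianization_order_prod A.subgroup_self B.subgroup_self)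
qed

lemma abelianization_order_prod_le_of_weakly_top:
  assumes "weakly_top (A \<times>\<times> B)" "subgroup H1 A" "subgroup H2 B"
  shows "abelianization_order A H1 * abelianization_order B H2
    \<le> abelianization_order A (carrier A) * abelianization_order B (carrier B)"
  using weakly_top_subgroup_le[OF assms(1) DirProd_subgroups[OF A.group_axioms assms(2)
      B.group_axioms assms(3)]]
  by (simp add: abelianization_order_prod assms(2,3) A.subgroup_self B.subgroup_self)

lemma abelianization_order_prod_less_of_top_group:
  assumes "top_group (A \<times>\<times> B)" "subgroup H1 A" "subgroup H2 B"
    and "H1 \<times> H2 \<noteq> carrier A \<times> carrier B"
  shows "abelianization_order A H1 * abelianization_order B H2
    < abelianization_order A (carrier A) * abelianization_order B (carrier B)"
  using top_group_subgroup_less[OF assms(1) DirProd_subgroups[OF A.group_axioms assms(2)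
      B.group_axioms assms(3)]] assms(4)
  by (simp add: abelianization_order_prod assms(2,3) A.subgroup_self B.subgroup_self)

lemma weakly_top_prod_iff: "weakly_top (A \<times>\<times> B) \<longleftrightarrow> weakly_top A \<and> weakly_top B"
proof
  assume W: "weakly_top (A \<times>\<times> B)"
  show "weakly_top A \<and> weakly_top B"
    unfolding weakly_top_def
    using abelianization_order_prod_le_of_weakly_top[OF W _ B.subgroup_self]
      abelianization_order_prod_le_of_weakly_top[OF W A.subgroup_self]
      A.abelianization_order_pos[OF A.subgroup_self finite_A]
      B.abelianization_order_pos[OF B.subgroup_self finite_B]
    by auto
qed (simp add: weakly_top_prod)

lemma top_group_prod_iff: "top_group (A \<times>\<times> B) \<longleftrightarrow> top_group A \<and> top_group B"
proof
  assume T: "top_group (A \<times>\<times> B)"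
  show "top_group A \<and> top_group B"
    unfolding top_group_def
    using abelianization_order_prod_less_of_top_group[OF T _ B.subgroup_self]
      abelianization_order_prod_less_of_top_group[OF T A.subgroup_self]
      A.abelianization_order_pos[OF A.subgroup_self finite_A]
      B.abelianization_order_pos[OF B.subgroup_self finite_B]
    by auto
qed (simp add: top_group_prod)

end

theorem lemma2p3:
  fixes A :: "('a, 'c) monoid_scheme" and B :: "('b, 'd) monoid_scheme"
  assumes "group A" and "group B"
    and "finite (carrier A)" and "finite (carrier B)"
  shows "(weakly_top (A \<times>\<times> B) \<longleftrightarrow> weakly_top A \<and> weakly_top B)
       \<and> (top_group (A \<times>\<times> B) \<longleftrightarrow> top_group A \<and> top_group B)"
proof -
  interpret finite_group_pair A B
    by (intro finite_group_pair.intro finite_group_pair_axioms.intro assms)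
  show ?thesis
    using weakly_top_prod_iff top_group_prod_iff by blast
qed

end
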